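(* For every semistandard hook-valued tableau $T$, the tableau $P(T)$ (the first component of the uncrowding map $\mathcal U(T)=(P(T),Q(T))$) is a set-valued tableau, i.e. a hook-valued tableau with arm excess $0$.
   Context: French notation: row $1$ is the bottom row, rows are numbered upward, columns from left to right; cell $(r,c)$ lies in row $r$ and column $c$. A semistandard tableau of hook shape $U$ consists of a hook entry $x$, a leg $\ell_1<\dots<\ell_p$ above $x$ with $x<\ell_1$, and an arm $a_1\le\dots\le a_q$ to the right of $x$ with $x\le a_1$ ($p,q\ge0$, positive integers). A (semistandard) hook-valued tableau (HVT) of partition shape $\lambda$ is a filling of the cells of $\lambda$ by such hook tableaux such that $\max(A)\le\min(B)$ whenever the cell of $A$ is left of the cell of $B$ in the same row, and $\max(A)<\min(C)$ whenever the cell of $A$ is below the cell of $C$ in the same column. Write $\mathsf H_T(r,c),\mathsf L_T(r,c),\mathsf A_T(r,c)$ for hook entry, leg, arm of cell $(r,c)$. Arm excess = total number of arm entries; a set-valued tableau is an HVT of arm excess $0$. Uncrowding bumping $\mathcal V_b$: if arm excess of $T$ is $0$, $\mathcal V_b(T)=T$. Otherwise let $c$ be the largest index of a column containing a cell with nonempty arm; among such cells in column $c$ let $(r,c)$ be the one whose arm contains the largest value. Let $a$ be the largest arm entry of $(r,c)$, $\ell$ its largest leg entry, and $(a,\ell]\cap\mathsf L_T(r,c)$ the set of leg entries $x$ of $(r,c)$ with $a<x\le\ell$. In column $c+1$ find the smallest entry $\ge a$. If none exists, attach a new empty cell on top of column $c+1$, with row $\tilde r$, and let $k$ be empty; otherwise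 let $k$ be this entry and $(\tilde r,c+1)$ its cell. (a) If $\tilde r\ne r$: remove $a$ from the arm of $(r,c)$, put $a$ in the position of $k$ in $(\tilde r,c+1)$ (as hook entry if the cell is new), append $k$ (if nonempty) to the arm of $(\tilde r,c+1)$. (b) If $\tilde r=r$: move $(a,\ell]\cap\mathsf L_T(r,c)$ from the leg of $(r,c)$ into the leg of $(r,c+1)$, remove $a$ from the arm of $(r,c)$, replace the hook entry of $(r,c+1)$ by $a$, and append $k$ (if nonempty) to the arm of $(r,c+1)$. Uncrowding insertion: $\mathcal V(T)=\mathcal V_b^d(T)$ where $d\ge1$ is minimal such that $\mathsf{shape}(\mathcal V_b^d(T))\neq\mathsf{shape}(\mathcal V_b^{d-1}(T))$ or $\mathcal V_b^d(T)=\mathcal V_b^{d-1}(T)$. Uncrowding map: for $T\in\mathsf{HVT}(\lambda)$ with arm excess $\alpha$, set $P_0=T$ and $Q_0$ the empty tableau of shape $\lambda/\lambda$; for $1\le i\le\alpha$ let $P_i=\mathcal V(P_{i-1})$, let $c$ be the index of the rightmost column of $P_{i-1}$ containing a cell with nonzero arm excess and $\tilde c$ the column of the cell $\mathsf{shape}(P_i)/\mathsf{shape}(P_{i-1})$; $Q_i$ is $Q_{i-1}$ with this cell added and filled with $\tilde c-c$. Then $\mathcal U(T)=(P(T),Q(T)):=(P_\alpha,Q_\alpha)$. *)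

theory Defs
  imports Main "HOL-Library.Multiset"
begin

text \<open>A hook tableau: (hook entry x, leg as a set of strictly increasing entries,
  arm as a multiset of weakly increasing entries).  Order within leg/arm is determined
  by sortedness, so sets/multisets lose no information.\<close>
type_synonym hook = "nat \<times> nat set \<times> nat multiset"

definition hentry :: "hook \<Rightarrow> nat" where "hentry h = fst h"
definition hleg :: "hook \<Rightarrow> nat set" where "hleg h = fst (snd h)"
definition harm :: "hook \<Rightarrow> nat multiset" where "harm h = snd (snd h)"

definition hentries :: "hook \<Rightarrow> nat set" where
  "hentries h = {hentry h} \<union> hleg h \<union> set_mset (harm h)"

definition valid_hook :: "hook \<Rightarrow> bool" where
  "valid_hook h \<longleftrightarrow> 1 \<le> hentry h \<and> finite (hleg h) \<and>
     (\<forall>l\<in>hleg h. hentry h < l) \<and> (\<forall>a\<in>#harm h. hentry h \<le> a)"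

text \<open>A tableau maps cells (r,c) (row r, column c, both \<ge> 1) to hook tableaux.\<close>
type_synonym tableau = "nat \<times> nat \<Rightarrow> hook option"

definition cell :: "tableau \<Rightarrow> nat \<times> nat \<Rightarrow> hook" where
  "cell T p = the (T p)"

definition partition_shape :: "(nat \<times> nat) set \<Rightarrow> bool" where
  "partition_shape D \<longleftrightarrow> finite D \<and> (\<forall>(r,c)\<in>D. 1 \<le> r \<and> 1 \<le> c \<and>
     (\<forall>r' c'. 1 \<le> r' \<and> r' \<le> r \<and> 1 \<le> c' \<and> c' \<le> c \<longrightarrow> (r',c') \<in> D))"

definition is_HVT :: "tableau \<Rightarrow> bool" where
  "is_HVT T \<longleftrightarrow> partition_shape (dom T) \<and>
     (\<forall>p\<in>dom T. valid_hook (cell T p)) \<and>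
     (\<forall>r c c'. (r,c) \<in> dom T \<and> (r,c') \<in> dom T \<and> c < c' \<longrightarrow>
        Max (hentries (cell T (r,c))) \<le> Min (hentries (cell T (r,c')))) \<and>
     (\<forall>r r' c. (r,c) \<in> dom T \<and> (r',c) \<in> dom T \<and> r < r' \<longrightarrow>
        Max (hentries (cell T (r,c))) < Min (hentries (cell T (r',c))))"

definition arm_excess :: "tableau \<Rightarrow> nat" where
  "arm_excess T = (\<Sum>p\<in>dom T. size (harm (cell T p)))"

definition is_set_valued :: "tableau \<Rightarrow> bool" where
  "is_set_valued T \<longleftrightarrow> is_HVT T \<and> arm_excess T = 0"

definition arm_cells :: "tableau \<Rightarrow> (nat \<times> nat) set" where
  "arm_cells T = {p \<in> dom T. harm (cell T p) \<noteq> {#}}"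

definition bump_col :: "tableau \<Rightarrow> nat" where
  "bump_col T = Max (snd ` arm_cells T)"

definition bump_row :: "tableau \<Rightarrow> nat" where
  "bump_row T = fst (ARG_MAX (\<lambda>p. Max (set_mset (harm (cell T p)))) p.
                       p \<in> arm_cells T \<and> snd p = bump_col T)"

definition col_entries :: "tableau \<Rightarrow> nat \<Rightarrow> nat set" where
  "col_entries T c = \<Union> {hentries (cell T (r',c)) | r'. (r',c) \<in> dom T}"

definition replace_entry :: "nat \<Rightarrow> nat \<Rightarrow> hook \<Rightarrow> hook" where
  "replace_entry k a h =
     (if hentry h = k then (a, hleg h, harm h)
      else if k \<in> hleg h then (hentry h, insert a (hleg h - {k}), harm h)
      else (hentry h, hleg h, harm h - {#k#} + {#a#}))"

definition bump :: "tableau \<Rightarrow> tableau" where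
  "bump T = (if arm_excess T = 0 then T else
     let c = bump_col T; r = bump_row T; H = cell T (r,c);
         a = Max (set_mset (harm H));
         Lmove = {x \<in> hleg H. a < x};
         G = {e \<in> col_entries T (c+1). a \<le> e};
         kopt = (if G = {} then None else Some (Min G));
         rt = (case kopt of
                 None \<Rightarrow> Max (insert 0 {r'. (r',c+1) \<in> dom T}) + 1
               | Some k \<Rightarrow> (SOME r'. (r',c+1) \<in> dom T \<and> k \<in> hentries (cell T (r',c+1))))
     in if rt \<noteq> r then
          T((r,c) := Some (hentry H, hleg H, harm H - {#a#}),
            (rt,c+1) := Some (case kopt of
                None \<Rightarrow> (a, {}, {#})
              | Some k \<Rightarrow> (let h' = replace_entry k a (cell T (rt,c+1))
                           in (hentry h', hleg h', harm h' + {#k#}))))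
        else
          T((r,c) := Some (hentry H, hleg H - Lmove, harm H - {#a#}),
            (r,c+1) := Some (case kopt of
                None \<Rightarrow> (a, Lmove, {#})
              | Some k \<Rightarrow> (a, hleg (cell T (r,c+1)) \<union> Lmove,
                            harm (cell T (r,c+1)) + {#k#}))))"

definition uncrowd_insert :: "tableau \<Rightarrow> tableau" where
  "uncrowd_insert T =
     (let d = (LEAST d. 1 \<le> d \<and>
                 (dom ((bump ^^ d) T) \<noteq> dom ((bump ^^ (d-1)) T) \<or>
                  (bump ^^ d) T = (bump ^^ (d-1)) T))
      in (bump ^^ d) T)"

definition uncrowd_P :: "tableau \<Rightarrow> tableau" where
  "uncrowd_P T = (uncrowd_insert ^^ arm_excess T) T"

end

theory Submission
  imports Defs
begin

text \<open>A bump removes the largest arm entry \<open>a\<close> of the rightmost cell with a nonempty arm and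
  puts it into the next column: either on a new cell on top of that column, or in place of the
  least entry \<open>k \<ge> a\<close> of the column, which goes into the arm of its cell. Both modified cells
  satisfy the row and column inequalities again, so every bump yields a hook-valued tableau.
  A bump creating a new cell lowers the arm excess by one; any other bump keeps the shape and
  the arm excess but moves the rightmost arm one column further right, which can only happen
  finitely often. Hence every uncrowding insertion lowers the arm excess by exactly one, and
  after \<open>\<alpha>\<close> insertions no arm entry is left.\<close>

abbreviation ent :: "tableau \<Rightarrow> nat \<times> nat \<Rightarrow> nat set" where
  "ent T p \<equiv> hentries (cell T p)"

abbreviation hd_entry :: "tableau \<Rightarrow> nat \<times> nat \<Rightarrow> nat" where
  "hd_entry T p \<equiv> hentry (cell T p)"

lemma hook_sel [simp]: "hentry (x, L, A) = x" "hleg (x, L, A) = L" "harm (x, L, A) = A"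
  by (simp_all add: hentry_def hleg_def harm_def)

lemma hentries_eq [simp]: "hentries (x, L, A) = insert x (L \<union> set_mset A)"
  by (auto simp: hentries_def)

lemma hentry_in_hentries: "hentry h \<in> hentries h"
  by (simp add: hentries_def)

lemma hentries_nonempty: "hentries h \<noteq> {}"
  using hentry_in_hentries by blast

lemma valid_hook_eq:
  "valid_hook (x, L, A) \<longleftrightarrow> 1 \<le> x \<and> finite L \<and> (\<forall>l\<in>L. x < l) \<and> (\<forall>a\<in>#A. x \<le> a)"
  by (simp add: valid_hook_def)

lemma finite_hentries: "valid_hook h \<Longrightarrow> finite (hentries h)"
  by (auto simp: valid_hook_def hentries_def)

lemma hentry_le: "valid_hook h \<Longrightarrow> x \<in> hentries h \<Longrightarrow> hentry h \<le> x"
  by (auto simp: valid_hook_def hentries_def)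

lemma Min_hentries: "valid_hook h \<Longrightarrow> Min (hentries h) = hentry h"
  by (meson Min_eqI hentry_in_hentries finite_hentries hentry_le)

lemma cell_fun_upd: "cell (T(p := Some h)) q = (if q = p then h else cell T q)"
  by (simp add: cell_def)

lemma is_HVT_iff:
  "is_HVT T \<longleftrightarrow> partition_shape (dom T) \<and> (\<forall>p\<in>dom T. valid_hook (cell T p)) \<and>
     (\<forall>r c c'. (r, c) \<in> dom T \<and> (r, c') \<in> dom T \<and> c < c' \<longrightarrow>
        (\<forall>x\<in>ent T (r, c). x \<le> hd_entry T (r, c'))) \<and>
     (\<forall>r r' c. (r, c) \<in> dom T \<and> (r', c) \<in> dom T \<and> r < r' \<longrightarrow>
        (\<forall>x\<in>ent T (r, c). x < hd_entry T (r', c)))"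
proof -
  have "Max (ent T p) \<le> Min (ent T q) \<longleftrightarrow> (\<forall>x\<in>ent T p. x \<le> hd_entry T q)"
       "Max (ent T p) < Min (ent T q) \<longleftrightarrow> (\<forall>x\<in>ent T p. x < hd_entry T q)"
    if "valid_hook (cell T p)" "valid_hook (cell T q)" for p q
    using that by (simp_all add: Min_hentries finite_hentries hentries_nonempty)
  then show ?thesis
    unfolding is_HVT_def by (smt (verit, best))
qed

lemma HVT_row_le:
  "is_HVT T \<Longrightarrow> (r, c) \<in> dom T \<Longrightarrow> (r, c') \<in> dom T \<Longrightarrow> c < c' \<Longrightarrow>
    x \<in> ent T (r, c) \<Longrightarrow> x \<le> hd_entry T (r, c')"
  unfolding is_HVT_iff by blast

lemma HVT_col_less:
  "is_HVT T \<Longrightarrow> (r, c) \<in> dom T \<Longrightarrow> (r', c) \<in> dom T \<Longrightarrow> r < r' \<Longrightarrow>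
    x \<in> ent T (r, c) \<Longrightarrow> x < hd_entry T (r', c)"
  unfolding is_HVT_iff by blast

lemma HVT_valid_hook: "is_HVT T \<Longrightarrow> p \<in> dom T \<Longrightarrow> valid_hook (cell T p)"
  unfolding is_HVT_def by blast

lemma HVT_partition_shape: "is_HVT T \<Longrightarrow> partition_shape (dom T)"
  unfolding is_HVT_def by blast

lemma HVT_finite_dom: "is_HVT T \<Longrightarrow> finite (dom T)"
  using HVT_partition_shape unfolding partition_shape_def by blast

lemma partition_shape_pos:
  "partition_shape D \<Longrightarrow> (r, c) \<in> D \<Longrightarrow> 1 \<le> r \<and> 1 \<le> c"
  unfolding partition_shape_def by blast

lemma partition_shape_down:
  "partition_shape D \<Longrightarrow> (r, c) \<in> D \<Longrightarrow> 1 \<le> r' \<Longrightarrow> r' \<le> r \<Longrightarrow> 1 \<le> c' \<Longrightarrow> c' \<le> c \<Longrightarrow>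
    (r', c') \<in> D"
  unfolding partition_shape_def by blast

lemma partition_shape_insert:
  assumes "partition_shape D" "1 \<le> i" "1 \<le> j"
    and "\<And>r c. 1 \<le> r \<Longrightarrow> r \<le> i \<Longrightarrow> 1 \<le> c \<Longrightarrow> c \<le> j \<Longrightarrow> (r, c) \<noteq> (i, j) \<Longrightarrow> (r, c) \<in> D"
  shows "partition_shape (insert (i, j) D)"
  using assms unfolding partition_shape_def by (auto 4 3)

lemma HVT_le_hentry_northeast:
  assumes T: "is_HVT T" and p: "(r', c') \<in> dom T" and q: "(r, c) \<in> dom T"
    and "r' \<le> r" "c' \<le> c" "(r', c') \<noteq> (r, c)" and x: "x \<in> ent T (r', c')"
  shows "x \<le> hd_entry T (r, c)"
proof (cases "r' = r")
  case True
  with assms(5,6) have "c' < c" by auto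
  then show ?thesis using HVT_row_le[OF T p _ _ x] q True by blast
next
  case False
  with \<open>r' \<le> r\<close> have "r' < r" by simp
  note ps = HVT_partition_shape[OF T]
  have rc: "(r', c) \<in> dom T"
    using partition_shape_down[OF ps q] partition_shape_pos[OF ps p] partition_shape_pos[OF ps q]
      \<open>r' \<le> r\<close> by blast
  obtain y where "y \<in> ent T (r', c)" "x \<le> y"
  proof (cases "c' = c")
    case True
    then show ?thesis using that x by blast
  next
    case False
    then show ?thesis using that[OF hentry_in_hentries] HVT_row_le[OF T p rc _ x] \<open>c' \<le> c\<close> by simp
  qed
  then show ?thesis using HVT_col_less[OF T rc q \<open>r' < r\<close>] by fastforce
qed

lemma is_HVT_shrink_cell:
  assumes T: "is_HVT T" and p: "p \<in> dom T" and h: "valid_hook h"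
    and e: "hentry h = hd_entry T p" and s: "hentries h \<subseteq> ent T p"
  shows "is_HVT (T(p := Some h))"
proof -
  let ?T = "T(p := Some h)"
  have dom_eq: "dom ?T = dom T"
    using p by auto
  have sub: "x \<in> ent ?T q \<Longrightarrow> x \<in> ent T q" and hd_eq: "hd_entry ?T q = hd_entry T q" for q x
    using e s by (auto simp: cell_def split: if_splits)
  have valid: "valid_hook (cell ?T q)" if "q \<in> dom T" for q
    using h HVT_valid_hook[OF T that] by (simp add: cell_def)
  show ?thesis
    unfolding is_HVT_iff dom_eq
  proof (intro conjI ballI allI impI valid)
    show "partition_shape (dom T)"
      by (rule HVT_partition_shape[OF T])
  next
    fix r c c' x
    assume "(r, c) \<in> dom T \<and> (r, c') \<in> dom T \<and> c < c'" "x \<in> ent ?T (r, c)"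
    then show "x \<le> hd_entry ?T (r, c')"
      using HVT_row_le[OF T] sub hd_eq by metis
  next
    fix r r' c x
    assume "(r, c) \<in> dom T \<and> (r', c) \<in> dom T \<and> r < r'" "x \<in> ent ?T (r, c)"
    then show "x < hd_entry ?T (r', c)"
      using HVT_col_less[OF T] sub hd_eq by metis
  qed
qed

lemma is_HVT_update_cell:
  assumes T: "is_HVT T" and ps: "partition_shape (insert (i, j) (dom T))" and h: "valid_hook h"
    and left: "\<And>c x. (i, c) \<in> dom T \<Longrightarrow> c < j \<Longrightarrow> x \<in> ent T (i, c) \<Longrightarrow> x \<le> hentry h"
    and right: "\<And>c x. (i, c) \<in> dom T \<Longrightarrow> j < c \<Longrightarrow> x \<in> hentries h \<Longrightarrow> x \<le> hd_entry T (i, c)"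
    and below: "\<And>r x. (r, j) \<in> dom T \<Longrightarrow> r < i \<Longrightarrow> x \<in> ent T (r, j) \<Longrightarrow> x < hentry h"
    and above: "\<And>r x. (r, j) \<in> dom T \<Longrightarrow> i < r \<Longrightarrow> x \<in> hentries h \<Longrightarrow> x < hd_entry T (r, j)"
  shows "is_HVT (T((i, j) := Some h))"
proof -
  let ?T = "T((i, j) := Some h)"
  have dom_upd: "dom ?T = insert (i, j) (dom T)"
    by simp
  show ?thesis
    unfolding is_HVT_iff dom_upd
  proof (intro conjI ps ballI allI impI)
    fix q assume "q \<in> insert (i, j) (dom T)"
    then show "valid_hook (cell ?T q)"
      using h HVT_valid_hook[OF T, of q] by (cases "q = (i, j)") (simp_all add: cell_fun_upd)
  next
    fix r c c' x
    assume rc: "(r, c) \<in> insert (i, j) (dom T) \<and> (r, c') \<in> insert (i, j) (dom T) \<and> c < c'"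
      and x: "x \<in> ent ?T (r, c)"
    consider (new) "(r, c) = (i, j)" | (new') "(r, c') = (i, j)" | (old) "(r, c) \<noteq> (i, j)" "(r, c') \<noteq> (i, j)"
      by blast
    then show "x \<le> hd_entry ?T (r, c')"
    proof cases
      case new
      with rc have "(i, c') \<in> dom T" "j < c'" by auto
      with new x show ?thesis using right by (simp add: cell_fun_upd)
    next
      case new'
      with rc have "(i, c) \<in> dom T" "c < j" by auto
      with new' x show ?thesis using left by (simp add: cell_fun_upd)
    next
      case old
      with rc have "(r, c) \<in> dom T" "(r, c') \<in> dom T" by blast+
      moreover have "x \<in> ent T (r, c)"
        using x by (simp only: cell_fun_upd if_not_P[OF old(1)])
      ultimately have "x \<le> hd_entry T (r, c')"
        using HVT_row_le[OF T] rc by blast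
      then show ?thesis
        by (simp only: cell_fun_upd if_not_P[OF old(2)])
    qed
  next
    fix r r' c x
    assume rc: "(r, c) \<in> insert (i, j) (dom T) \<and> (r', c) \<in> insert (i, j) (dom T) \<and> r < r'"
      and x: "x \<in> ent ?T (r, c)"
    consider (new) "(r, c) = (i, j)" | (new') "(r', c) = (i, j)" | (old) "(r, c) \<noteq> (i, j)" "(r', c) \<noteq> (i, j)"
      by blast
    then show "x < hd_entry ?T (r', c)"
    proof cases
      case new
      with rc have "(r', j) \<in> dom T" "i < r'" by auto
      with new x show ?thesis using above by (simp add: cell_fun_upd)
    next
      case new'
      with rc have "(r, j) \<in> dom T" "r < i" by auto
      with new' x show ?thesis using below by (simp add: cell_fun_upd)
    next
      case old
      with rc have "(r, c) \<in> dom T" "(r', c) \<in> dom T" by blast+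
      moreover have "x \<in> ent T (r, c)"
        using x by (simp only: cell_fun_upd if_not_P[OF old(1)])
      ultimately have "x < hd_entry T (r', c)"
        using HVT_col_less[OF T] rc by blast
      then show ?thesis
        by (simp only: cell_fun_upd if_not_P[OF old(2)])
    qed
  qed
qed

lemma partition_shape_insert_next_column:
  assumes ps: "partition_shape D" and rc: "(r, c) \<in> D" and rt: "1 \<le> rt" "rt \<le> r"
    and column: "(rt, Suc c) \<notin> D \<Longrightarrow> \<forall>r'. (r', Suc c) \<in> D \<longleftrightarrow> 1 \<le> r' \<and> r' < rt"
  shows "partition_shape (insert (rt, Suc c) D)"
proof (cases "(rt, Suc c) \<in> D")
  case True
  then show ?thesis using ps by (simp add: insert_absorb)
next
  case False
  show ?thesis
  proof (rule partition_shape_insert[OF ps rt(1)])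
    fix r' c'
    assume "1 \<le> r'" "r' \<le> rt" "1 \<le> c'" "c' \<le> Suc c" "(r', c') \<noteq> (rt, Suc c)"
    then show "(r', c') \<in> D"
      using column[OF False] partition_shape_down[OF ps rc, of r' c'] rt
      by (cases "c' = Suc c") auto
  qed simp
qed

text \<open>Every new entry of \<open>(rt, c + 1)\<close> is bounded by an old one (\<open>dominated\<close>), so the
  conditions towards the right and the top are inherited from \<open>T\<close>; towards the left and the
  bottom they follow from \<open>a\<close> being large enough.\<close>

lemma is_HVT_bump_update:
  assumes T: "is_HVT T" and rc: "(r, c) \<in> dom T" and rt: "1 \<le> rt" "rt \<le> r"
    and h1: "valid_hook h1" "hentry h1 = hd_entry T (r, c)" "hentries h1 \<subseteq> ent T (r, c)"
    and h1_le: "rt = r \<Longrightarrow> \<forall>x\<in>hentries h1. x \<le> a"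
    and a: "hd_entry T (r, c) \<le> a"
    and h2: "valid_hook h2"
    and hentry_h2: "hentry h2 = a \<or> (rt, Suc c) \<in> dom T \<and> hentry h2 = hd_entry T (rt, Suc c)"
    and dominated: "(rt, Suc c) \<in> dom T \<Longrightarrow> \<forall>x\<in>hentries h2. \<exists>y\<in>ent T (rt, Suc c). x \<le> y"
    and below: "\<And>r' x. (r', Suc c) \<in> dom T \<Longrightarrow> r' < rt \<Longrightarrow> x \<in> ent T (r', Suc c) \<Longrightarrow> x < a"
    and column: "(rt, Suc c) \<notin> dom T \<Longrightarrow> \<forall>r'. (r', Suc c) \<in> dom T \<longleftrightarrow> 1 \<le> r' \<and> r' < rt"
  shows "is_HVT (T((r, c) := Some h1, (rt, Suc c) := Some h2))"
proof -
  let ?T1 = "T((r, c) := Some h1)"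
  note ps = HVT_partition_shape[OF T]
  have dom1: "dom ?T1 = dom T"
    using rc by auto
  have ent1: "x \<in> ent T q" if "x \<in> ent ?T1 q" for x q
    using that h1(3) by (auto simp: cell_fun_upd split: if_splits)
  show ?thesis
  proof (rule is_HVT_update_cell[OF is_HVT_shrink_cell[OF T rc h1], unfolded dom1])
    show "partition_shape (insert (rt, Suc c) (dom T))"
      by (rule partition_shape_insert_next_column[OF ps rc rt column])
  next
    show "valid_hook h2" by (rule h2)
  next
    fix c' x
    assume c': "(rt, c') \<in> dom T" "c' < Suc c" and x: "x \<in> ent ?T1 (rt, c')"
    have "x \<le> a"
    proof (cases "(rt, c') = (r, c)")
      case True
      then show ?thesis using h1_le x by (simp add: cell_fun_upd)
    next
      case False
      then have "x \<le> hd_entry T (r, c)"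
        using HVT_le_hentry_northeast[OF T c'(1) rc rt(2) _ _ ent1[OF x]] c'(2) by simp
      then show ?thesis using a by simp
    qed
    moreover have "(rt, Suc c) \<in> dom T \<Longrightarrow> x \<le> hd_entry T (rt, Suc c)"
      using HVT_row_le[OF T c'(1) _ c'(2) ent1[OF x]] .
    ultimately show "x \<le> hentry h2"
      using hentry_h2 by metis
  next
    fix c' x
    assume c': "(rt, c') \<in> dom T" "Suc c < c'" and x: "x \<in> hentries h2"
    have "(rt, Suc c) \<in> dom T"
      using partition_shape_down[OF ps c'(1) rt(1)] c'(2) by simp
    then obtain y where "y \<in> ent T (rt, Suc c)" "x \<le> y"
      using dominated x by blast
    then have "x \<le> hd_entry T (rt, c')"
      using HVT_row_le[OF T \<open>(rt, Suc c) \<in> dom T\<close> c'] by (meson le_trans)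
    then show "x \<le> hd_entry ?T1 (rt, c')"
      using c'(2) by (simp add: cell_fun_upd)
  next
    fix r' x
    assume r': "(r', Suc c) \<in> dom T" "r' < rt" and x: "x \<in> ent ?T1 (r', Suc c)"
    have "x < a"
      using below[OF r' ent1[OF x]] .
    moreover have "(rt, Suc c) \<in> dom T \<Longrightarrow> x < hd_entry T (rt, Suc c)"
      using HVT_col_less[OF T r'(1) _ r'(2) ent1[OF x]] .
    ultimately show "x < hentry h2"
      using hentry_h2 by metis
  next
    fix r' x
    assume r': "(r', Suc c) \<in> dom T" "rt < r'" and x: "x \<in> hentries h2"
    have "(rt, Suc c) \<in> dom T"
      using column r' less_asym by blast
    then obtain y where "y \<in> ent T (rt, Suc c)" "x \<le> y"
      using dominated x by blast
    then have "x < hd_entry T (r', Suc c)"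
      using HVT_col_less[OF T \<open>(rt, Suc c) \<in> dom T\<close> r'] by (meson le_less_trans)
    then show "x < hd_entry ?T1 (r', Suc c)"
      using rt(2) r'(2) by (simp add: cell_fun_upd)
  qed
qed

lemma mem_col_entries: "x \<in> col_entries T c \<longleftrightarrow> (\<exists>r. (r, c) \<in> dom T \<and> x \<in> ent T (r, c))"
  unfolding col_entries_def by blast

lemma col_entriesI: "(r, c) \<in> dom T \<Longrightarrow> x \<in> ent T (r, c) \<Longrightarrow> x \<in> col_entries T c"
  unfolding mem_col_entries by blast

lemma finite_col_entries:
  assumes "is_HVT T"
  shows "finite (col_entries T c)"
proof -
  have "col_entries T c = (\<Union>p\<in>dom T \<inter> {p. snd p = c}. ent T p)"
    unfolding col_entries_def by force
  then show ?thesis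
    using HVT_finite_dom[OF assms] finite_hentries[OF HVT_valid_hook[OF assms]] by simp
qed

lemma replace_entry_push:
  assumes C: "valid_hook C" and k: "k \<in> hentries C" and "a \<le> k" "1 \<le> a"
    and hentry_C: "hentry C \<noteq> k \<Longrightarrow> hentry C < a"
  defines "h \<equiv> let h' = replace_entry k a C in (hentry h', hleg h', harm h' + {#k#})"
  shows "valid_hook h \<and> (hentry h = a \<or> hentry h = hentry C) \<and>
    (\<forall>x\<in>hentries h. \<exists>y\<in>hentries C. x \<le> y) \<and> size (harm h) = Suc (size (harm C))"
proof -
  obtain x L A where C_eq: "C = (x, L, A)"
    by (cases C) auto
  consider "x = k" | "x \<noteq> k" "k \<in> L" | "x \<noteq> k" "k \<notin> L" "k \<in># A"
    using k by (auto simp: C_eq)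
  then show ?thesis
  proof cases
    case 1
    then show ?thesis
      using C \<open>a \<le> k\<close> \<open>1 \<le> a\<close> unfolding h_def C_eq replace_entry_def
      by (auto simp: valid_hook_eq)
  next
    case 2
    then show ?thesis
      using C \<open>a \<le> k\<close> hentry_C unfolding h_def C_eq replace_entry_def
      by (auto simp: valid_hook_eq)
  next
    case 3
    then show ?thesis
      using C \<open>a \<le> k\<close> hentry_C unfolding h_def C_eq replace_entry_def
      by (auto simp: valid_hook_eq size_Suc_Diff1 dest: in_diffD)
  qed
qed

lemma arm_excess_fun_upd:
  assumes "finite (dom T)"
  shows "arm_excess (T(p := Some h)) + (if p \<in> dom T then size (harm (cell T p)) else 0)
    = arm_excess T + size (harm h)"
proof -
  have "arm_excess (T(p := Some h)) = size (harm h) + (\<Sum>q\<in>dom T - {p}. size (harm (cell T q)))"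
    unfolding arm_excess_def using assms
    by (simp add: sum.insert_remove cell_fun_upd)
  moreover have "arm_excess T = (if p \<in> dom T then size (harm (cell T p)) else 0)
      + (\<Sum>q\<in>dom T - {p}. size (harm (cell T q)))"
    unfolding arm_excess_def using assms by (simp add: sum.remove)
  ultimately show ?thesis
    by simp
qed

locale bumpable =
  fixes T :: tableau
  assumes HVT: "is_HVT T" and excess: "arm_excess T \<noteq> 0"
begin

definition col :: nat where "col = bump_col T"
definition row :: nat where "row = bump_row T"
definition src :: hook where "src = cell T (row, col)"
definition bumped :: nat where "bumped = Max (set_mset (harm src))"
definition moved_leg :: "nat set" where "moved_leg = {x \<in> hleg src. bumped < x}"
definition candidates :: "nat set" where
  "candidates = {e \<in> col_entries T (Suc col). bumped \<le> e}"
definition displaced :: "nat option" where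
  "displaced = (if candidates = {} then None else Some (Min candidates))"
definition target_row :: nat where
  "target_row = (case displaced of
      None \<Rightarrow> Suc (Max (insert 0 {r. (r, Suc col) \<in> dom T}))
    | Some k \<Rightarrow> (SOME r. (r, Suc col) \<in> dom T \<and> k \<in> hentries (cell T (r, Suc col))))"
definition target :: hook where "target = cell T (target_row, Suc col)"
definition new_src :: hook where
  "new_src = (hentry src, if target_row = row then hleg src - moved_leg else hleg src,
     harm src - {#bumped#})"
definition new_target :: hook where
  "new_target = (case displaced of
      None \<Rightarrow> (bumped, if target_row = row then moved_leg else {}, {#})
    | Some k \<Rightarrow>
        if target_row = row then (bumped, hleg target \<union> moved_leg, harm target + {#k#})
        else let h = replace_entry k bumped target in (hentry h, hleg h, harm h + {#k#}))"

lemma bump_eq: "bump T = T((row, col) := Some new_src, (target_row, Suc col) := Some new_target)"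
  using excess
  unfolding bump_def Let_def Suc_eq_plus1[symmetric] col_def[symmetric] row_def[symmetric]
    src_def[symmetric] bumped_def[symmetric] moved_leg_def[symmetric] candidates_def[symmetric]
    displaced_def[symmetric] target_row_def[symmetric]
  by (cases displaced) (simp_all add: new_src_def new_target_def target_def Let_def)

lemma partition_shape_dom: "partition_shape (dom T)"
  by (rule HVT_partition_shape[OF HVT])

lemma finite_arm_cells: "finite (arm_cells T)"
  using HVT_finite_dom[OF HVT] by (simp add: arm_cells_def)

lemma arm_cells_nonempty: "arm_cells T \<noteq> {}"
  using excess HVT_finite_dom[OF HVT] by (auto simp: arm_excess_def arm_cells_def)

lemma arm_cell_col_le: "p \<in> arm_cells T \<Longrightarrow> snd p \<le> col"
  using finite_arm_cells by (simp add: col_def bump_col_def)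

lemma src_arm_cell: "(row, col) \<in> arm_cells T"
proof -
  let ?P = "\<lambda>p. p \<in> arm_cells T \<and> snd p = col"
  let ?f = "\<lambda>p. Max (set_mset (harm (cell T p)))"
  have "col \<in> snd ` arm_cells T"
    unfolding col_def bump_col_def using finite_arm_cells arm_cells_nonempty by simp
  then obtain p where "?P p" by auto
  moreover have "\<forall>q. ?P q \<longrightarrow> ?f q < Suc (Max (?f ` arm_cells T))"
    using finite_arm_cells by (simp add: le_imp_less_Suc)
  ultimately have "?P (arg_max ?f ?P)"
    by (rule arg_max_natI)
  moreover have "row = fst (arg_max ?f ?P)"
    by (simp add: row_def bump_row_def col_def)
  ultimately show ?thesis
    by (metis prod.collapse)
qed

lemma src_in_dom: "(row, col) \<in> dom T"
  using src_arm_cell by (simp add: arm_cells_def)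

lemma valid_src: "valid_hook src"
  unfolding src_def by (rule HVT_valid_hook[OF HVT src_in_dom])

lemma bumped_in_arm: "bumped \<in># harm src"
  using src_arm_cell unfolding bumped_def src_def arm_cells_def by (simp add: Max_in)

lemma bumped_max: "x \<in># harm src \<Longrightarrow> x \<le> bumped"
  unfolding bumped_def by simp

lemma hentry_src_le_bumped: "hentry src \<le> bumped"
  using valid_src bumped_in_arm by (simp add: valid_hook_def)

lemma bumped_pos: "1 \<le> bumped"
  using valid_src hentry_src_le_bumped by (simp add: valid_hook_def)

lemma bumped_le_right: "(row, Suc col) \<in> dom T \<Longrightarrow> bumped \<le> hd_entry T (row, Suc col)"
  using HVT_row_le[OF HVT src_in_dom] bumped_in_arm by (simp add: src_def hentries_def)

lemma finite_candidates: "finite candidates"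
  using finite_col_entries[OF HVT] by (simp add: candidates_def)

lemma displaced_NoneD:
  "displaced = None \<Longrightarrow> (r, Suc col) \<in> dom T \<Longrightarrow> x \<in> ent T (r, Suc col) \<Longrightarrow> x < bumped"
  unfolding displaced_def candidates_def mem_col_entries by (simp split: if_splits) (meson not_le)

lemma displaced_SomeD:
  assumes "displaced = Some k"
  shows "bumped \<le> k" "k \<in> col_entries T (Suc col)"
    and "\<And>x. x \<in> col_entries T (Suc col) \<Longrightarrow> bumped \<le> x \<Longrightarrow> k \<le> x"
proof -
  have "candidates \<noteq> {}" "k = Min candidates"
    using assms by (simp_all add: displaced_def split: if_splits)
  then show "bumped \<le> k" "k \<in> col_entries T (Suc col)"
      and "\<And>x. x \<in> col_entries T (Suc col) \<Longrightarrow> bumped \<le> x \<Longrightarrow> k \<le> x"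
    using Min_in[OF finite_candidates] Min_le[OF finite_candidates]
    by (auto simp: candidates_def)
qed

lemma valid_target: "(target_row, Suc col) \<in> dom T \<Longrightarrow> valid_hook target"
  unfolding target_def by (rule HVT_valid_hook[OF HVT])

lemma target_SomeD:
  assumes "displaced = Some k"
  shows "(target_row, Suc col) \<in> dom T" "k \<in> hentries target"
proof -
  have "\<exists>r. (r, Suc col) \<in> dom T \<and> k \<in> ent T (r, Suc col)"
    using displaced_SomeD(2)[OF assms] mem_col_entries by blast
  then have "(target_row, Suc col) \<in> dom T \<and> k \<in> ent T (target_row, Suc col)"
    unfolding target_row_def assms option.case by (rule someI_ex)
  then show "(target_row, Suc col) \<in> dom T" "k \<in> hentries target"
    by (simp_all add: target_def)
qed

lemma column_None:
  assumes "displaced = None"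
  shows "(r, Suc col) \<in> dom T \<longleftrightarrow> 1 \<le> r \<and> r < target_row"
proof -
  let ?R = "{r. (r, Suc col) \<in> dom T}"
  have fin: "finite ?R"
    using finite_subset[of ?R "fst ` dom T"] HVT_finite_dom[OF HVT] by force
  have target_row: "target_row = Suc (Max (insert 0 ?R))"
    using assms by (simp add: target_row_def)
  show ?thesis
  proof
    assume "(r, Suc col) \<in> dom T"
    then show "1 \<le> r \<and> r < target_row"
      using partition_shape_pos[OF partition_shape_dom] fin target_row
      by (simp add: le_imp_less_Suc)
  next
    assume r: "1 \<le> r \<and> r < target_row"
    then have "Max (insert 0 ?R) \<in> ?R"
      using Max_in[of "insert 0 ?R"] fin target_row by force
    then show "(r, Suc col) \<in> dom T"
      using partition_shape_down[OF partition_shape_dom] r target_row by simp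
  qed
qed

lemma target_in_dom_iff: "(target_row, Suc col) \<in> dom T \<longleftrightarrow> displaced \<noteq> None"
  using column_None target_SomeD(1) by auto

lemma target_row_pos: "1 \<le> target_row"
  using partition_shape_pos[OF partition_shape_dom target_SomeD(1)]
  by (cases displaced) (simp_all add: target_row_def)

text \<open>The cell right of \<open>(row, col)\<close>, if any, has entries \<open>\<ge> bumped\<close>, so the receiving cell
  cannot lie above it.\<close>

lemma target_row_le_row: "target_row \<le> row"
proof (rule ccontr)
  assume "\<not> target_row \<le> row"
  then have "row < target_row" by simp
  show False
  proof (cases displaced)
    case None
    then have "(row, Suc col) \<in> dom T"
      using column_None partition_shape_pos[OF partition_shape_dom src_in_dom]
        \<open>row < target_row\<close> by blast
    then show False
      using bumped_le_right displaced_NoneD[OF None] hentry_in_hentries not_le by blast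
  next
    case (Some k)
    have "(row, Suc col) \<in> dom T"
      using partition_shape_down[OF partition_shape_dom target_SomeD(1)[OF Some]]
        partition_shape_pos[OF partition_shape_dom src_in_dom] \<open>row < target_row\<close> by simp
    then have "k \<le> hd_entry T (row, Suc col)"
      using displaced_SomeD(3)[OF Some] bumped_le_right mem_col_entries hentry_in_hentries by blast
    also have "\<dots> < hentry target"
      using HVT_col_less[OF HVT \<open>(row, Suc col) \<in> dom T\<close> target_SomeD(1)[OF Some]
        \<open>row < target_row\<close> hentry_in_hentries] by (simp add: target_def)
    also have "\<dots> \<le> k"
      using hentry_le[OF valid_target[OF target_SomeD(1)[OF Some]] target_SomeD(2)[OF Some]] .
    finally show False by simp
  qed
qed

lemma below_target_lt_bumped:
  assumes r: "(r, Suc col) \<in> dom T" "r < target_row" and x: "x \<in> ent T (r, Suc col)"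
  shows "x < bumped"
proof (cases displaced)
  case None
  then show ?thesis using displaced_NoneD r(1) x by blast
next
  case (Some k)
  have "x < hentry target"
    using HVT_col_less[OF HVT r(1) target_SomeD(1)[OF Some] r(2) x] by (simp add: target_def)
  also have "\<dots> \<le> k"
    using hentry_le[OF valid_target[OF target_SomeD(1)[OF Some]] target_SomeD(2)[OF Some]] .
  finally show ?thesis
    using displaced_SomeD(3)[OF Some] mem_col_entries r(1) x not_le by blast
qed

lemma hentry_target_lt_bumped:
  assumes "displaced = Some k" "hentry target \<noteq> k"
  shows "hentry target < bumped"
proof -
  have "hentry target < k"
    using hentry_le[OF valid_target[OF target_SomeD(1)] target_SomeD(2)] assms by fastforce
  moreover have "hentry target \<in> col_entries T (Suc col)"
    using col_entriesI[OF target_SomeD(1)[OF assms(1)] hentry_in_hentries] by (simp add: target_def)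
  ultimately show ?thesis
    using displaced_SomeD(3)[OF assms(1)] not_le by blast
qed

lemma hentry_target_same_row:
  assumes "displaced = Some k" "target_row = row"
  shows "hentry target = k"
  using hentry_target_lt_bumped[OF assms(1)] bumped_le_right target_SomeD(1)[OF assms(1)] assms(2)
  by (fastforce simp: target_def)

lemma valid_new_src: "valid_hook new_src"
  using valid_src unfolding new_src_def by (auto simp: valid_hook_def dest: in_diffD)

lemma hentry_new_src: "hentry new_src = hentry src"
  by (simp add: new_src_def)

lemma hentries_new_src: "hentries new_src \<subseteq> hentries src"
  by (auto simp: new_src_def hentries_def dest: in_diffD)

lemma new_src_le_bumped: "target_row = row \<Longrightarrow> x \<in> hentries new_src \<Longrightarrow> x \<le> bumped"
  using hentry_src_le_bumped bumped_max
  by (auto simp: new_src_def moved_leg_def dest: in_diffD)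

lemma size_harm_new_src: "Suc (size (harm new_src)) = size (harm src)"
  using bumped_in_arm by (simp add: new_src_def size_Suc_Diff1)

lemma moved_leg_le_target:
  assumes "target_row = row" "(target_row, Suc col) \<in> dom T" "x \<in> moved_leg"
  shows "x \<le> hentry target"
  using HVT_row_le[OF HVT src_in_dom, of "Suc col" x] assms
  by (simp add: target_def src_def moved_leg_def hentries_def)

lemma new_target_props:
  "valid_hook new_target \<and>
   (hentry new_target = bumped \<or> (target_row, Suc col) \<in> dom T \<and> hentry new_target = hentry target) \<and>
   ((target_row, Suc col) \<in> dom T \<longrightarrow> (\<forall>x\<in>hentries new_target. \<exists>y\<in>hentries target. x \<le> y)) \<and>
   size (harm new_target) = (case displaced of None \<Rightarrow> 0 | Some _ \<Rightarrow> Suc (size (harm target)))"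
proof (cases displaced)
  case None
  then have "(target_row, Suc col) \<notin> dom T"
    using target_in_dom_iff by simp
  then show ?thesis
    using None bumped_pos valid_src
    by (auto simp: new_target_def valid_hook_def moved_leg_def)
next
  case (Some k)
  note in_dom = target_SomeD(1)[OF Some]
  show ?thesis
  proof (cases "target_row = row")
    case True
    have "hentry target = k"
      by (rule hentry_target_same_row[OF Some True])
    then show ?thesis
      using Some True in_dom valid_target[OF in_dom] displaced_SomeD(1)[OF Some] bumped_pos
        valid_src moved_leg_le_target[OF True in_dom] target_SomeD(2)[OF Some]
      by (auto simp: new_target_def valid_hook_def moved_leg_def hentries_def)
  next
    case False
    then show ?thesis
      using replace_entry_push[OF valid_target[OF in_dom] target_SomeD(2)[OF Some]
          displaced_SomeD(1)[OF Some] bumped_pos hentry_target_lt_bumped[OF Some]]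
        Some in_dom
      by (simp add: new_target_def)
  qed
qed

lemma is_HVT_bump: "is_HVT (bump T)"
  unfolding bump_eq
proof (rule is_HVT_bump_update[OF HVT src_in_dom target_row_pos target_row_le_row valid_new_src])
  show "hentry new_src = hd_entry T (row, col)" "hentries new_src \<subseteq> ent T (row, col)"
    "hd_entry T (row, col) \<le> bumped"
    using hentry_new_src hentries_new_src hentry_src_le_bumped by (simp_all add: src_def)
  show "target_row = row \<Longrightarrow> \<forall>x\<in>hentries new_src. x \<le> bumped"
    using new_src_le_bumped by blast
  show "valid_hook new_target"
    "hentry new_target = bumped \<or>
      (target_row, Suc col) \<in> dom T \<and> hentry new_target = hd_entry T (target_row, Suc col)"
    "(target_row, Suc col) \<in> dom T \<Longrightarrow>
      \<forall>x\<in>hentries new_target. \<exists>y\<in>ent T (target_row, Suc col). x \<le> y"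
    using new_target_props by (simp_all add: target_def)
  show "\<And>r x. (r, Suc col) \<in> dom T \<Longrightarrow> r < target_row \<Longrightarrow> x \<in> ent T (r, Suc col) \<Longrightarrow> x < bumped"
    by (rule below_target_lt_bumped)
  show "(target_row, Suc col) \<notin> dom T \<Longrightarrow> \<forall>r. (r, Suc col) \<in> dom T \<longleftrightarrow> 1 \<le> r \<and> r < target_row"
    using column_None target_in_dom_iff by blast
qed

lemma dom_bump: "dom (bump T) = insert (target_row, Suc col) (dom T)"
  using src_in_dom by (auto simp: bump_eq)

lemma arm_excess_bump:
  "arm_excess (bump T) + (if displaced = None then 1 else 0) = arm_excess T"
proof -
  let ?T1 = "T((row, col) := Some new_src)"
  have fin: "finite (dom T)"
    by (rule HVT_finite_dom[OF HVT])
  have "arm_excess ?T1 + size (harm src) = arm_excess T + size (harm new_src)"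
    using arm_excess_fun_upd[OF fin, of "(row, col)" new_src] src_in_dom by (simp add: src_def)
  then have T1: "Suc (arm_excess ?T1) = arm_excess T"
    using size_harm_new_src by simp
  have "arm_excess (bump T) + (if (target_row, Suc col) \<in> dom T then size (harm target) else 0)
      = arm_excess ?T1 + size (harm new_target)"
    using arm_excess_fun_upd[of ?T1 "(target_row, Suc col)" new_target] fin src_in_dom
    by (simp add: bump_eq cell_fun_upd target_def split: if_split_asm)
  then show ?thesis
    using T1 new_target_props target_in_dom_iff by (cases displaced) simp_all
qed

lemma col_le_Max: "col \<le> Max (snd ` dom T)"
proof -
  have "col \<in> snd ` dom T"
    using src_in_dom by force
  then show ?thesis
    using HVT_finite_dom[OF HVT] by simp
qed

lemma bump_col_bump:
  assumes "displaced \<noteq> None"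
  shows "bump_col (bump T) = Suc col"
  unfolding bump_col_def
proof (rule Max_eqI)
  show "finite (snd ` arm_cells (bump T))"
    using HVT_finite_dom[OF is_HVT_bump] by (simp add: arm_cells_def)
next
  have "harm new_target \<noteq> {#}"
    using new_target_props assms by (auto split: option.splits)
  then show "Suc col \<in> snd ` arm_cells (bump T)"
    unfolding arm_cells_def by (force simp: bump_eq cell_fun_upd)
next
  fix c assume "c \<in> snd ` arm_cells (bump T)"
  then obtain p where p: "p \<in> arm_cells (bump T)" "c = snd p"
    by blast
  show "c \<le> Suc col"
  proof (cases "p = (row, col) \<or> p = (target_row, Suc col)")
    case True
    then show ?thesis using p by auto
  next
    case False
    then have "p \<in> arm_cells T"
      using p(1) by (simp add: arm_cells_def bump_eq cell_fun_upd)
    then show ?thesis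
      using arm_cell_col_le p(2) by fastforce
  qed
qed

lemma bump_neq: "bump T \<noteq> T"
proof
  assume "bump T = T"
  moreover have "cell (bump T) (row, col) = new_src"
    by (simp add: bump_eq cell_fun_upd)
  ultimately have "new_src = src"
    by (simp add: src_def)
  then show False
    using size_harm_new_src by simp
qed

end

definition bumps_keep_shape :: "tableau \<Rightarrow> nat \<Rightarrow> bool" where
  "bumps_keep_shape T d \<longleftrightarrow>
     (\<forall>j<d. dom ((bump ^^ Suc j) T) = dom ((bump ^^ j) T) \<and> (bump ^^ Suc j) T \<noteq> (bump ^^ j) T)"

lemma bumps_keep_shape_0 [simp]: "bumps_keep_shape T 0"
  by (simp add: bumps_keep_shape_def)

lemma bumps_keep_shape_Suc:
  "bumps_keep_shape T (Suc d) \<longleftrightarrow> dom (bump T) = dom T \<and> bump T \<noteq> T \<and> bumps_keep_shape (bump T) d"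
proof -
  have "(bump ^^ Suc j) T = (bump ^^ j) (bump T)" for j
    by (simp add: funpow_Suc_right del: funpow.simps)
  then show ?thesis
    unfolding bumps_keep_shape_def All_less_Suc2 by simp
qed

lemma uncrowd_insert_eq_funpow:
  assumes keep: "bumps_keep_shape T d"
    and stop: "dom ((bump ^^ Suc d) T) \<noteq> dom ((bump ^^ d) T) \<or> (bump ^^ Suc d) T = (bump ^^ d) T"
  shows "uncrowd_insert T = (bump ^^ Suc d) T"
proof -
  let ?P = "\<lambda>e. 1 \<le> e \<and> (dom ((bump ^^ e) T) \<noteq> dom ((bump ^^ (e - 1)) T) \<or>
    (bump ^^ e) T = (bump ^^ (e - 1)) T)"
  have "?P (Suc d)"
    using stop by (simp only: diff_Suc_1) simp
  moreover have "Suc d \<le> e" if e: "?P e" for e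
  proof (rule ccontr)
    assume "\<not> Suc d \<le> e"
    moreover obtain j where j: "e = Suc j"
      using e[THEN conjunct1] by (cases e) simp_all
    ultimately have "j < d"
      by simp
    then show False
      using keep[unfolded bumps_keep_shape_def, rule_format, OF \<open>j < d\<close>] e j by simp
  qed
  ultimately have "(LEAST e. ?P e) = Suc d"
    by (rule Least_equality)
  then show ?thesis
    unfolding uncrowd_insert_def Let_def by simp
qed

lemma bump_col_le_Max:
  assumes "is_HVT T" "arm_excess T \<noteq> 0"
  shows "bump_col T \<le> Max (snd ` dom T)"
proof -
  interpret bumpable T
    using assms by unfold_locales
  show ?thesis
    using col_le_Max by (simp add: col_def)
qed

lemma bump_cases:
  assumes "is_HVT T" "arm_excess T \<noteq> 0"
  shows "is_HVT (bump T) \<and>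
    (dom (bump T) \<noteq> dom T \<and> arm_excess (bump T) = arm_excess T - 1 \<or>
     dom (bump T) = dom T \<and> bump T \<noteq> T \<and> arm_excess (bump T) = arm_excess T \<and>
     bump_col (bump T) = Suc (bump_col T))"
proof -
  interpret bumpable T
    using assms by unfold_locales
  show ?thesis
  proof (cases displaced)
    case None
    then have "dom (bump T) \<noteq> dom T"
      using dom_bump target_in_dom_iff by (metis insertI1)
    moreover have "arm_excess (bump T) = arm_excess T - 1"
      using arm_excess_bump None by simp
    ultimately show ?thesis
      using is_HVT_bump by blast
  next
    case (Some k)
    then have "dom (bump T) = dom T"
      using dom_bump target_in_dom_iff by (simp add: insert_absorb)
    moreover have "arm_excess (bump T) = arm_excess T"
      using arm_excess_bump Some by simp
    ultimately show ?thesis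
      using is_HVT_bump bump_neq bump_col_bump Some by (simp add: col_def)
  qed
qed

text \<open>Each bump that keeps the shape moves the bumped entry one column to the right,
  so after fewer bumps than there are columns a new cell appears.\<close>

lemma bumps_until_new_cell:
  assumes "is_HVT T" "arm_excess T \<noteq> 0"
  shows "\<exists>d. bumps_keep_shape T d \<and> dom ((bump ^^ Suc d) T) \<noteq> dom ((bump ^^ d) T) \<and>
    is_HVT ((bump ^^ Suc d) T) \<and> arm_excess ((bump ^^ Suc d) T) = arm_excess T - 1"
  using assms
proof (induction "Max (snd ` dom T) - bump_col T" arbitrary: T rule: less_induct)
  case less
  show ?case
  proof (cases "dom (bump T) = dom T")
    case False
    then show ?thesis
      using bump_cases[OF less.prems] by (intro exI[of _ 0]) simp
  next
    case True
    then have step: "is_HVT (bump T)" "bump T \<noteq> T" "arm_excess (bump T) = arm_excess T"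
        "bump_col (bump T) = Suc (bump_col T)"
      using bump_cases[OF less.prems] by auto
    then have "Max (snd ` dom (bump T)) - bump_col (bump T) < Max (snd ` dom T) - bump_col T"
      using bump_col_le_Max[of "bump T"] less.prems(2) True by simp
    then obtain d where d: "bumps_keep_shape (bump T) d"
        "dom ((bump ^^ Suc d) (bump T)) \<noteq> dom ((bump ^^ d) (bump T))"
        "is_HVT ((bump ^^ Suc d) (bump T))"
        "arm_excess ((bump ^^ Suc d) (bump T)) = arm_excess (bump T) - 1"
      using less.hyps step(1) less.prems(2) step(3) by metis
    have shift: "(bump ^^ n) (bump T) = (bump ^^ Suc n) T" for n
      by (simp add: funpow_Suc_right del: funpow.simps)
    show ?thesis
      using d True step(2,3) by (intro exI[of _ "Suc d"]) (simp add: bumps_keep_shape_Suc shift)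
  qed
qed

lemma uncrowd_insert_HVT:
  assumes "is_HVT T"
  shows "is_HVT (uncrowd_insert T) \<and> arm_excess (uncrowd_insert T) = arm_excess T - 1"
proof (cases "arm_excess T = 0")
  case True
  then have "bump T = T"
    by (simp add: bump_def)
  then have "uncrowd_insert T = T"
    using uncrowd_insert_eq_funpow[of T 0] by simp
  then show ?thesis
    using assms True by simp
next
  case False
  then show ?thesis
    using bumps_until_new_cell[OF assms] uncrowd_insert_eq_funpow by metis
qed

lemma funpow_uncrowd_insert_HVT:
  assumes "is_HVT T"
  shows "is_HVT ((uncrowd_insert ^^ n) T) \<and> arm_excess ((uncrowd_insert ^^ n) T) = arm_excess T - n"
  by (induction n) (simp_all add: assms uncrowd_insert_HVT)

theorem corollary3p7:
  assumes "is_HVT T"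
  shows "is_set_valued (uncrowd_P T)"
  using funpow_uncrowd_insert_HVT[OF assms, of "arm_excess T"]
  by (simp add: uncrowd_P_def is_set_valued_def)

end
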